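(* Let $X$ be a set. For any totally bounded uniformity $\mathcal{U}$ on $X$ we have $\mathcal{U} =_T [\kappa]^{<\omega}$, where $\kappa=\operatorname{cof}(\mathcal{U})$. More generally, for any uniformity $\mathcal{U}$ on $X$ and any totally bounded subset $S\subseteq X$ we have $\mathcal{U}\restriction S =_T [\kappa]^{<\omega}$, where $\kappa=\operatorname{cof}(\mathcal{U}\restriction S)$.
   Context: Uniformities are ordered by reverse inclusion. For $U$ in a uniformity and $x\in X$, $U[x]=\{y:(x,y)\in U\}$. A uniformity $\mathcal{U}$ on $X$ is totally bounded if for every $U\in\mathcal{U}$ there is a finite $F\subseteq X$ with $\bigcup_{x\in F}U[x]=X$; a subset $S$ is totally bounded if the induced uniformity $\mathcal{U}\restriction S=\{U\cap S^2:U\in\mathcal{U}\}$ on $S$ is totally bounded. $\operatorname{cof}(P)$ is the least size of a cofinal subset of a directed set $P$. $[\kappa]^{<\omega}$ is the set of finite subsets of $\kappa$ ordered by inclusion. For directed sets $P,Q$, $P \ge_T Q$ means there is a map $\phi:P\to Q$ such that $\phi(C)$ is cofinal in $Q$ for every cofinal $C\subseteq P$; $P =_T Q$ means $P\ge_T Q$ and $Q \ge_T P$. *)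

theory Defs
  imports Main
begin

definition uniformity :: "'a set \<Rightarrow> ('a \<times> 'a) set set \<Rightarrow> bool" where
  "uniformity X \<U> \<longleftrightarrow>
     \<U> \<noteq> {} \<and>
     (\<forall>U\<in>\<U>. U \<subseteq> X \<times> X) \<and>
     (\<forall>U\<in>\<U>. Id_on X \<subseteq> U) \<and>
     (\<forall>U\<in>\<U>. \<forall>V. U \<subseteq> V \<and> V \<subseteq> X \<times> X \<longrightarrow> V \<in> \<U>) \<and>
     (\<forall>U\<in>\<U>. \<forall>V\<in>\<U>. U \<inter> V \<in> \<U>) \<and>
     (\<forall>U\<in>\<U>. converse U \<in> \<U>) \<and>
     (\<forall>U\<in>\<U>. \<exists>V\<in>\<U>. V O V \<subseteq> U)"

definition restr_unif :: "('a \<times> 'a) set set \<Rightarrow> 'a set \<Rightarrow> ('a \<times> 'a) set set" where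
  "restr_unif \<U> S = (\<lambda>U. U \<inter> (S \<times> S)) ` \<U>"

definition totally_bounded_unif :: "'a set \<Rightarrow> ('a \<times> 'a) set set \<Rightarrow> bool" where
  "totally_bounded_unif X \<U> \<longleftrightarrow>
     (\<forall>U\<in>\<U>. \<exists>F. finite F \<and> F \<subseteq> X \<and> (\<Union>x\<in>F. U `` {x}) = X)"

definition totally_bounded_subset :: "('a \<times> 'a) set set \<Rightarrow> 'a set \<Rightarrow> bool" where
  "totally_bounded_subset \<U> S \<longleftrightarrow> totally_bounded_unif S (restr_unif \<U> S)"

text \<open>Directed sets are given by a carrier P and an order le (le p q means p is below q).\<close>
definition cofinal_in :: "'p set \<Rightarrow> ('p \<Rightarrow> 'p \<Rightarrow> bool) \<Rightarrow> 'p set \<Rightarrow> bool" where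
  "cofinal_in P le C \<longleftrightarrow> C \<subseteq> P \<and> (\<forall>p\<in>P. \<exists>c\<in>C. le p c)"

text \<open>C is a cofinal subset of least cardinality, so |C| = cof(P).\<close>
definition min_cofinal :: "'p set \<Rightarrow> ('p \<Rightarrow> 'p \<Rightarrow> bool) \<Rightarrow> 'p set \<Rightarrow> bool" where
  "min_cofinal P le C \<longleftrightarrow> cofinal_in P le C \<and>
     (\<forall>C'. cofinal_in P le C' \<longrightarrow> ordLeq3 (card_of C) (card_of C'))"

definition tukey_ge :: "'p set \<Rightarrow> ('p \<Rightarrow> 'p \<Rightarrow> bool) \<Rightarrow> 'q set \<Rightarrow> ('q \<Rightarrow> 'q \<Rightarrow> bool) \<Rightarrow> bool" where
  "tukey_ge P leP Q leQ \<longleftrightarrow>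
     (\<exists>\<phi>. (\<forall>p\<in>P. \<phi> p \<in> Q) \<and>
          (\<forall>C. cofinal_in P leP C \<longrightarrow> cofinal_in Q leQ (\<phi> ` C)))"

definition tukey_eq :: "'p set \<Rightarrow> ('p \<Rightarrow> 'p \<Rightarrow> bool) \<Rightarrow> 'q set \<Rightarrow> ('q \<Rightarrow> 'q \<Rightarrow> bool) \<Rightarrow> bool" where
  "tukey_eq P leP Q leQ \<longleftrightarrow> tukey_ge P leP Q leQ \<and> tukey_ge Q leQ P leP"

definition rev_incl :: "'b set \<Rightarrow> 'b set \<Rightarrow> bool" where
  "rev_incl U V \<longleftrightarrow> V \<subseteq> U"

definition fin_subsets :: "'k set \<Rightarrow> 'k set set" where
  "fin_subsets K = {A. A \<subseteq> K \<and> finite A}"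

end

theory Submission
  imports Defs "HOL-Library.Equipollence" "HOL-Algebra.Free_Abelian_Groups"
begin

(* Sending a finite F \<subseteq> K to the intersection of the corresponding members of a cofinal family
   C of size |K| is a Tukey map [K]^<omega> \<rightarrow> U; this direction needs no total boundedness.

   Conversely it suffices to find |C| entourages such that every V \<in> U lies in only finitely many
   of them. They come from quadruples a \<subseteq> b \<subseteq> c \<subseteq> d of subsets of X, each a uniform
   neighbourhood of the previous one in the sense that (X - a)^2 \<union> b^2, (X - b)^2 \<union> c^2 and
   (X - c)^2 \<union> d^2 are entourages; the quadruple contributes its outer entourage
   ((X - a)^2 \<union> b^2) \<inter> ((X - c)^2 \<union> d^2). Call q interlocked with q' if a' \<subseteq> b and c \<subseteq> d'.
   If W O W \<subseteq> V for a symmetric W with a finite W-net N, two quadruples whose outer entourages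
   contain V and whose sets a and c meet the same members of the net are mutually interlocked;
   so a family of pairwise non-interlocked quadruples has only finitely many outer entourages
   containing V. A maximal such family Q (Zorn) has |C| \<le> |Q|, since the finite intersections of
   the inner entourages (X - b)^2 \<union> c^2 of its members are cofinal: if none of them lay in V,
   take a symmetric W with W^5 \<subseteq> V and a finite W-net; if every net point n had a member of Q
   interlocked with the quadruple (W[n], W^2[n], W^3[n], W^4[n]), the inner entourages of these
   members would intersect inside W^5, so one of these quadruples could be added to Q. *)

lemma
  assumes "uniformity X \<U>"
  shows uniformity_nonempty: "\<U> \<noteq> {}"
    and uniformity_subset: "V \<in> \<U> \<Longrightarrow> V \<subseteq> X \<times> X"
    and uniformity_Id_on: "V \<in> \<U> \<Longrightarrow> Id_on X \<subseteq> V"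
    and uniformity_upward: "V \<in> \<U> \<Longrightarrow> V \<subseteq> W \<Longrightarrow> W \<subseteq> X \<times> X \<Longrightarrow> W \<in> \<U>"
    and uniformity_Int: "V \<in> \<U> \<Longrightarrow> W \<in> \<U> \<Longrightarrow> V \<inter> W \<in> \<U>"
    and uniformity_converse: "V \<in> \<U> \<Longrightarrow> converse V \<in> \<U>"
    and uniformity_half: "V \<in> \<U> \<Longrightarrow> \<exists>W\<in>\<U>. W O W \<subseteq> V"
  using assms unfolding uniformity_def by metis+

lemma uniformity_refl: "uniformity X \<U> \<Longrightarrow> V \<in> \<U> \<Longrightarrow> x \<in> X \<Longrightarrow> (x, x) \<in> V"
  using uniformity_Id_on by blast

lemma uniformity_Times_self: "uniformity X \<U> \<Longrightarrow> X \<times> X \<in> \<U>"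
  by (metis uniformity_nonempty uniformity_subset uniformity_upward ex_in_conv order_refl)

lemma uniformity_Inter_finite:
  assumes u: "uniformity X \<U>" and "finite \<F>" "\<F> \<subseteq> \<U>"
  shows "X \<times> X \<inter> \<Inter>\<F> \<in> \<U>"
  using assms(2,3)
proof (induction \<F> rule: finite_induct)
  case empty
  then show ?case using uniformity_Times_self[OF u] by simp
next
  case (insert V \<F>)
  then have "V \<inter> (X \<times> X \<inter> \<Inter>\<F>) \<in> \<U>" using uniformity_Int[OF u] by simp
  then show ?case by (simp add: Int_left_commute)
qed

lemma uniformity_subset_relcomp_self: "uniformity X \<U> \<Longrightarrow> W \<in> \<U> \<Longrightarrow> W \<subseteq> W O W"
  by (auto dest: uniformity_subset intro: uniformity_refl)

lemma uniformity_half_symmetric: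
  assumes u: "uniformity X \<U>" and "V \<in> \<U>"
  obtains W where "W \<in> \<U>" "converse W = W" "W O W \<subseteq> V"
proof -
  obtain W where W: "W \<in> \<U>" "W O W \<subseteq> V" using uniformity_half[OF u \<open>V \<in> \<U>\<close>] by blast
  have "W \<inter> converse W \<in> \<U>" using W(1) uniformity_Int[OF u] uniformity_converse[OF u] by blast
  moreover have "(W \<inter> converse W) O (W \<inter> converse W) \<subseteq> V" using W(2) by blast
  ultimately show thesis by (intro that) auto
qed

lemma uniformity_fifth_root_symmetric:
  assumes u: "uniformity X \<U>" and "V \<in> \<U>"
  obtains W where "W \<in> \<U>" "converse W = W" "W O W O W O W O W \<subseteq> V"
proof -
  obtain W1 where W1: "W1 \<in> \<U>" "W1 O W1 \<subseteq> V"
    using uniformity_half_symmetric[OF u \<open>V \<in> \<U>\<close>] .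
  obtain W2 where W2: "W2 \<in> \<U>" "W2 O W2 \<subseteq> W1"
    using uniformity_half_symmetric[OF u W1(1)] .
  obtain W where W: "W \<in> \<U>" "converse W = W" "W O W \<subseteq> W2"
    using uniformity_half_symmetric[OF u W2(1)] .
  have "W \<subseteq> W2" using uniformity_subset_relcomp_self[OF u W(1)] W(3) by (rule order_trans)
  have "W2 \<subseteq> W1" using uniformity_subset_relcomp_self[OF u W2(1)] W2(2) by (rule order_trans)
  have "W O W O W O W O W = (W O W) O (W O W) O W" by (simp add: O_assoc)
  also have "\<dots> \<subseteq> W2 O W2 O W2" using W(3) \<open>W \<subseteq> W2\<close> by (intro relcomp_mono) auto
  also have "\<dots> \<subseteq> W1 O W1"
    using W2(2) \<open>W2 \<subseteq> W1\<close> by (subst O_assoc[symmetric]) (rule relcomp_mono)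
  finally have "W O W O W O W O W \<subseteq> V" using W1(2) by (rule order_trans)
  with W show thesis by (intro that)
qed

lemma uniformity_restr_unif:
  assumes u: "uniformity X \<U>" and "S \<subseteq> X"
  shows "uniformity S (restr_unif \<U> S)"
  unfolding uniformity_def
proof (intro conjI ballI allI impI)
  show "restr_unif \<U> S \<noteq> {}"
    using uniformity_nonempty[OF u] by (simp add: restr_unif_def)
next
  fix V assume "V \<in> restr_unif \<U> S"
  then obtain V\<^sub>0 where V\<^sub>0: "V\<^sub>0 \<in> \<U>" "V = V\<^sub>0 \<inter> S \<times> S" by (auto simp: restr_unif_def)
  show "V \<subseteq> S \<times> S" using V\<^sub>0 by blast
  show "Id_on S \<subseteq> V"
    using V\<^sub>0(2) \<open>S \<subseteq> X\<close> by (auto intro: uniformity_refl[OF u V\<^sub>0(1)])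
  show "converse V \<in> restr_unif \<U> S"
    using V\<^sub>0 uniformity_converse[OF u V\<^sub>0(1)] unfolding restr_unif_def
    by (intro image_eqI[of _ _ "converse V\<^sub>0"]) auto
  obtain H where "H \<in> \<U>" "H O H \<subseteq> V\<^sub>0" using uniformity_half[OF u V\<^sub>0(1)] by blast
  then show "\<exists>W\<in>restr_unif \<U> S. W O W \<subseteq> V"
    using V\<^sub>0(2) unfolding restr_unif_def by (intro bexI[of _ "H \<inter> S \<times> S"]) auto
  fix W assume W: "V \<subseteq> W \<and> W \<subseteq> S \<times> S"
  have "V\<^sub>0 \<union> W \<in> \<U>"
    using uniformity_subset[OF u V\<^sub>0(1)] W \<open>S \<subseteq> X\<close>
    by (intro uniformity_upward[OF u V\<^sub>0(1)]) auto
  moreover have "W = (V\<^sub>0 \<union> W) \<inter> S \<times> S" using V\<^sub>0(2) W by blast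
  ultimately show "W \<in> restr_unif \<U> S" unfolding restr_unif_def by blast
next
  fix V W assume "V \<in> restr_unif \<U> S" "W \<in> restr_unif \<U> S"
  then obtain V\<^sub>0 W\<^sub>0 where "V\<^sub>0 \<in> \<U>" "W\<^sub>0 \<in> \<U>" "V = V\<^sub>0 \<inter> S \<times> S" "W = W\<^sub>0 \<inter> S \<times> S"
    by (auto simp: restr_unif_def)
  then show "V \<inter> W \<in> restr_unif \<U> S"
    unfolding restr_unif_def using uniformity_Int[OF u]
    by (intro image_eqI[of _ _ "V\<^sub>0 \<inter> W\<^sub>0"]) auto
qed

lemma totally_bounded_unifE:
  assumes "totally_bounded_unif X \<U>" "W \<in> \<U>"
  obtains N where "finite N" "N \<subseteq> X" "(\<Union>n\<in>N. W `` {n}) = X"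
  using assms unfolding totally_bounded_unif_def by metis

lemma tukey_ge_fin_subsets_uniformity:
  assumes u: "uniformity X \<U>" and C: "cofinal_in \<U> rev_incl C"
    and K: "|K| =o |C|"
  shows "tukey_ge (fin_subsets K) (\<subseteq>) \<U> rev_incl"
proof -
  obtain c where c: "bij_betw c K C" using K card_of_ordIso by blast
  define \<psi> where "\<psi> F = X \<times> X \<inter> \<Inter>(c ` F)" for F
  have \<psi>_mem: "\<psi> F \<in> \<U>" if "F \<in> fin_subsets K" for F
    using that c C unfolding \<psi>_def fin_subsets_def cofinal_in_def bij_betw_def
    by (intro uniformity_Inter_finite[OF u]) auto
  have "cofinal_in \<U> rev_incl (\<psi> ` D)" if D: "cofinal_in (fin_subsets K) (\<subseteq>) D" for D
    unfolding cofinal_in_def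
  proof (intro conjI ballI)
    show "\<psi> ` D \<subseteq> \<U>" using D \<psi>_mem unfolding cofinal_in_def by blast
    fix V assume "V \<in> \<U>"
    then obtain k where k: "k \<in> K" "c k \<subseteq> V"
      using C c unfolding cofinal_in_def rev_incl_def bij_betw_def by blast
    have "{k} \<in> fin_subsets K" using k(1) unfolding fin_subsets_def by blast
    then obtain F where F: "F \<in> D" "k \<in> F" using D unfolding cofinal_in_def by blast
    have "\<psi> F \<subseteq> V" using k F(2) unfolding \<psi>_def by blast
    then show "\<exists>W\<in>\<psi> ` D. rev_incl V W" using F(1) unfolding rev_incl_def by blast
  qed
  then show ?thesis unfolding tukey_ge_def using \<psi>_mem by blast
qed

lemma tukey_ge_uniformity_fin_subsets_if_finite:
  assumes u: "uniformity X \<U>" and E: "E ` K \<subseteq> \<U>"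
    and fin: "\<And>V. V \<in> \<U> \<Longrightarrow> finite {k\<in>K. V \<subseteq> E k}"
  shows "tukey_ge \<U> rev_incl (fin_subsets K) (\<subseteq>)"
proof -
  define \<phi> where "\<phi> V = {k\<in>K. V \<subseteq> E k}" for V
  have \<phi>_mem: "\<phi> V \<in> fin_subsets K" if "V \<in> \<U>" for V
    using fin[OF that] unfolding fin_subsets_def \<phi>_def by blast
  have "cofinal_in (fin_subsets K) (\<subseteq>) (\<phi> ` D)" if D: "cofinal_in \<U> rev_incl D" for D
    unfolding cofinal_in_def
  proof (intro conjI ballI)
    show "\<phi> ` D \<subseteq> fin_subsets K" using D \<phi>_mem unfolding cofinal_in_def by blast
    fix F assume F: "F \<in> fin_subsets K"
    then have "X \<times> X \<inter> \<Inter>(E ` F) \<in> \<U>"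
      using E unfolding fin_subsets_def by (intro uniformity_Inter_finite[OF u]) auto
    then obtain V where V: "V \<in> D" "V \<subseteq> X \<times> X \<inter> \<Inter>(E ` F)"
      using D unfolding cofinal_in_def rev_incl_def by blast
    have "F \<subseteq> \<phi> V" using F V(2) unfolding \<phi>_def fin_subsets_def by blast
    then show "\<exists>G\<in>\<phi> ` D. F \<subseteq> G" using V(1) by blast
  qed
  then show ?thesis unfolding tukey_ge_def using \<phi>_mem by blast
qed

definition nbhd_entourage :: "'a set \<Rightarrow> 'a set \<Rightarrow> 'a set \<Rightarrow> ('a \<times> 'a) set" where
  "nbhd_entourage X P Q = (X - P) \<times> (X - P) \<union> Q \<times> Q"

lemma nbhd_entourage_mem_imp_subset:
  assumes "uniformity X \<U>" "nbhd_entourage X P Q \<in> \<U>" "P \<subseteq> X"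
  shows "P \<subseteq> Q"
  using uniformity_refl[OF assms(1,2)] assms(3) unfolding nbhd_entourage_def by blast

lemma
  assumes u: "uniformity X \<U>" and W: "W \<in> \<U>" "converse W = W" and "R \<subseteq> X"
  shows Image_uniformity_subset: "W `` R \<subseteq> X"
    and nbhd_entourage_Image_mem: "nbhd_entourage X R (W `` R) \<in> \<U>"
proof -
  show WR: "W `` R \<subseteq> X" using uniformity_subset[OF u W(1)] by blast
  have RW: "R \<subseteq> W `` R" using \<open>R \<subseteq> X\<close> uniformity_refl[OF u W(1)] by blast
  have "W \<subseteq> nbhd_entourage X R (W `` R)"
  proof
    fix p assume "p \<in> W"
    moreover obtain x y where p: "p = (x, y)" by force
    ultimately have "(x, y) \<in> W" "(y, x) \<in> W" "x \<in> X" "y \<in> X"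
      using W(2) uniformity_subset[OF u W(1)] by auto
    then show "p \<in> nbhd_entourage X R (W `` R)"
      using RW unfolding p nbhd_entourage_def by blast
  qed
  moreover have "nbhd_entourage X R (W `` R) \<subseteq> X \<times> X"
    using WR unfolding nbhd_entourage_def by blast
  ultimately show "nbhd_entourage X R (W `` R) \<in> \<U>" using uniformity_upward[OF u W(1)] by blast
qed

datatype 'a quad = Quad (qa: "'a set") (qb: "'a set") (qc: "'a set") (qd: "'a set")

definition uniform_quad :: "'a set \<Rightarrow> ('a \<times> 'a) set set \<Rightarrow> 'a quad \<Rightarrow> bool" where
  "uniform_quad X \<U> q \<longleftrightarrow> qa q \<subseteq> X \<and> qb q \<subseteq> X \<and> qc q \<subseteq> X \<and> qd q \<subseteq> X \<and>
     nbhd_entourage X (qa q) (qb q) \<in> \<U> \<and> nbhd_entourage X (qb q) (qc q) \<in> \<U> \<and>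
     nbhd_entourage X (qc q) (qd q) \<in> \<U>"

definition outer_entourage :: "'a set \<Rightarrow> 'a quad \<Rightarrow> ('a \<times> 'a) set" where
  "outer_entourage X q = nbhd_entourage X (qa q) (qb q) \<inter> nbhd_entourage X (qc q) (qd q)"

definition inner_entourage :: "'a set \<Rightarrow> 'a quad \<Rightarrow> ('a \<times> 'a) set" where
  "inner_entourage X q = nbhd_entourage X (qb q) (qc q)"

definition interlocked :: "'a quad \<Rightarrow> 'a quad \<Rightarrow> bool" where
  "interlocked q q' \<longleftrightarrow> qa q' \<subseteq> qb q \<and> qc q \<subseteq> qd q'"

definition separated_family :: "'a set \<Rightarrow> ('a \<times> 'a) set set \<Rightarrow> 'a quad set \<Rightarrow> bool" where
  "separated_family X \<U> Q \<longleftrightarrow> (\<forall>q\<in>Q. uniform_quad X \<U> q) \<and>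
     (\<forall>q\<in>Q. \<forall>q'\<in>Q. interlocked q q' \<and> interlocked q' q \<longrightarrow> q = q')"

lemma uniform_quad_interlocked_self:
  "uniformity X \<U> \<Longrightarrow> uniform_quad X \<U> q \<Longrightarrow> interlocked q q"
  unfolding uniform_quad_def interlocked_def by (metis nbhd_entourage_mem_imp_subset order_trans)

lemma uniform_quad_outer_entourage_mem:
  "uniformity X \<U> \<Longrightarrow> uniform_quad X \<U> q \<Longrightarrow> outer_entourage X q \<in> \<U>"
  unfolding uniform_quad_def outer_entourage_def by (simp add: uniformity_Int)

lemma uniform_quad_inner_entourage_mem: "uniform_quad X \<U> q \<Longrightarrow> inner_entourage X q \<in> \<U>"
  unfolding uniform_quad_def inner_entourage_def by simp

lemma uniform_quad_trivial: "uniformity X \<U> \<Longrightarrow> uniform_quad X \<U> (Quad X X X X)"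
  unfolding uniform_quad_def nbhd_entourage_def by (simp add: uniformity_Times_self)

lemma separated_family_insert:
  assumes "separated_family X \<U> Q" "uniform_quad X \<U> r" "\<forall>q\<in>Q. \<not> interlocked q r"
  shows "separated_family X \<U> (insert r Q)"
  using assms unfolding separated_family_def by blast

lemma ex_maximal_separated_family:
  obtains Q where "separated_family X \<U> Q"
    "\<And>Q'. separated_family X \<U> Q' \<Longrightarrow> Q \<subseteq> Q' \<Longrightarrow> Q' = Q"
proof -
  have "\<Union>\<C> \<in> {Q. separated_family X \<U> Q}"
    if "\<C> \<in> chains {Q. separated_family X \<U> Q}" for \<C>
  proof -
    have sep: "\<And>Q. Q \<in> \<C> \<Longrightarrow> separated_family X \<U> Q"
      and cmp: "\<And>A B. A \<in> \<C> \<Longrightarrow> B \<in> \<C> \<Longrightarrow> A \<subseteq> B \<or> B \<subseteq> A"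
      using that unfolding chains_def chain_subset_def by blast+
    have "\<exists>Q\<in>\<C>. q \<in> Q \<and> q' \<in> Q" if "q \<in> \<Union>\<C>" "q' \<in> \<Union>\<C>" for q q'
      using that cmp by blast
    then show ?thesis using sep unfolding separated_family_def by (simp, meson UnionI)
  qed
  then obtain Q where "Q \<in> {Q. separated_family X \<U> Q}"
    "\<forall>Q'\<in>{Q. separated_family X \<U> Q}. Q \<subseteq> Q' \<longrightarrow> Q' = Q"
    using Zorn_Lemma by blast
  then show thesis by (intro that) auto
qed

lemma subset_nbhd_if_same_trace:
  assumes W: "converse W = W" "W O W \<subseteq> nbhd_entourage X P Q"
    and "R \<subseteq> X" and net: "(\<Union>n\<in>N. W `` {n}) = X"
    and trace: "{n\<in>N. W `` {n} \<inter> R \<noteq> {}} = {n\<in>N. W `` {n} \<inter> P \<noteq> {}}"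
  shows "R \<subseteq> Q"
proof
  fix r assume "r \<in> R"
  then obtain n where n: "n \<in> N" "(n, r) \<in> W" using \<open>R \<subseteq> X\<close> net by blast
  with \<open>r \<in> R\<close> have "W `` {n} \<inter> P \<noteq> {}" using trace by blast
  then obtain p where "p \<in> P" "(n, p) \<in> W" by blast
  then have "(p, n) \<in> W" using W(1) by (metis converseI)
  with n(2) have "(p, r) \<in> nbhd_entourage X P Q" using W(2) by blast
  with \<open>p \<in> P\<close> show "r \<in> Q" unfolding nbhd_entourage_def by blast
qed

lemma finite_separated_family_above:
  assumes u: "uniformity X \<U>" and tb: "totally_bounded_unif X \<U>" and "V \<in> \<U>"
    and Q: "separated_family X \<U> Q"
  shows "finite {q\<in>Q. V \<subseteq> outer_entourage X q}"
proof -
  obtain W where W: "W \<in> \<U>" "converse W = W" "W O W \<subseteq> V"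
    using uniformity_half_symmetric[OF u \<open>V \<in> \<U>\<close>] .
  obtain N where N: "finite N" "(\<Union>n\<in>N. W `` {n}) = X"
    using totally_bounded_unifE[OF tb W(1)] by metis
  define trace where "trace R = {n\<in>N. W `` {n} \<inter> R \<noteq> {}}" for R
  define S where "S = {q\<in>Q. V \<subseteq> outer_entourage X q}"
  have interlocked: "interlocked q q'"
    if "q \<in> S" "q' \<in> S" "trace (qa q) = trace (qa q')" "trace (qc q) = trace (qc q')" for q q'
  proof -
    have "uniform_quad X \<U> q" "uniform_quad X \<U> q'"
      and "V \<subseteq> outer_entourage X q" "V \<subseteq> outer_entourage X q'"
      using that(1,2) Q unfolding S_def separated_family_def by auto
    with W(3) have A: "W O W \<subseteq> nbhd_entourage X (qa q) (qb q)"
      and C: "W O W \<subseteq> nbhd_entourage X (qc q') (qd q')"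
      and "qa q' \<subseteq> X" "qc q \<subseteq> X"
      unfolding outer_entourage_def uniform_quad_def by auto
    have "qa q' \<subseteq> qb q"
      by (rule subset_nbhd_if_same_trace[OF W(2) A \<open>qa q' \<subseteq> X\<close> N(2)])
        (use that(3) in \<open>simp add: trace_def\<close>)
    moreover have "qc q \<subseteq> qd q'"
      by (rule subset_nbhd_if_same_trace[OF W(2) C \<open>qc q \<subseteq> X\<close> N(2)])
        (use that(4) in \<open>simp add: trace_def\<close>)
    ultimately show ?thesis unfolding interlocked_def ..
  qed
  have "inj_on (\<lambda>q. (trace (qa q), trace (qc q))) S"
  proof (rule inj_onI)
    fix q q' assume "q \<in> S" "q' \<in> S"
      and "(trace (qa q), trace (qc q)) = (trace (qa q'), trace (qc q'))"
    moreover from this have "interlocked q q'" "interlocked q' q" using interlocked by simp_all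
    ultimately show "q = q'" using Q unfolding S_def separated_family_def by blast
  qed
  moreover have "(\<lambda>q. (trace (qa q), trace (qc q))) ` S \<subseteq> Pow N \<times> Pow N"
    unfolding trace_def by blast
  ultimately show ?thesis unfolding S_def[symmetric] using N(1)
    by (meson finite_Pow_iff finite_SigmaI finite_subset finite_imageD)
qed

lemma ex_uniform_quad_not_interlocked:
  assumes u: "uniformity X \<U>" and tb: "totally_bounded_unif X \<U>" and "V \<in> \<U>"
    and not_below:
      "\<And>F. finite F \<Longrightarrow> F \<subseteq> Q \<Longrightarrow> \<not> X \<times> X \<inter> \<Inter>(inner_entourage X ` F) \<subseteq> V"
  obtains r where "uniform_quad X \<U> r" "\<forall>q\<in>Q. \<not> interlocked q r"
proof -
  obtain W where W: "W \<in> \<U>" "converse W = W" "W O W O W O W O W \<subseteq> V"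
    using uniformity_fifth_root_symmetric[OF u \<open>V \<in> \<U>\<close>] .
  obtain N where N: "finite N" "N \<subseteq> X" "(\<Union>n\<in>N. W `` {n}) = X"
    using totally_bounded_unifE[OF tb W(1)] .
  define r where
    "r n = Quad (W `` {n}) (W `` W `` {n}) (W `` W `` W `` {n}) (W `` W `` W `` W `` {n})" for n
  have "\<exists>n\<in>N. \<forall>q\<in>Q. \<not> interlocked q (r n)"
  proof (rule ccontr)
    assume "\<not> ?thesis"
    then obtain g where g: "\<And>n. n \<in> N \<Longrightarrow> g n \<in> Q \<and> interlocked (g n) (r n)" by metis
    have "X \<times> X \<inter> \<Inter>(inner_entourage X ` g ` N) \<subseteq> V"
    proof (rule subrelI)
      fix x y assume xy: "(x, y) \<in> X \<times> X \<inter> \<Inter>(inner_entourage X ` g ` N)"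
      then obtain n where n: "n \<in> N" "(n, x) \<in> W" using N(3) by blast
      with g have "x \<in> qb (g n)" "qc (g n) \<subseteq> W `` W `` W `` W `` {n}"
        unfolding interlocked_def r_def by auto
      moreover have "(x, y) \<in> inner_entourage X (g n)" using xy n(1) by blast
      ultimately have "y \<in> (W O W O W O W) `` {n}"
        unfolding inner_entourage_def nbhd_entourage_def by (auto simp: relcomp_Image)
      then have "(n, y) \<in> W O W O W O W" by blast
      moreover have "(x, n) \<in> W" using n(2) W(2) by (metis converseI)
      ultimately show "(x, y) \<in> V" using W(3) by blast
    qed
    moreover have "finite (g ` N)" "g ` N \<subseteq> Q" using N(1) g by auto
    ultimately show False using not_below by blast
  qed
  moreover have "uniform_quad X \<U> (r n)" if "n \<in> N" for n
  proof -
    have "{n} \<subseteq> X" using that N(2) by blast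
    then show ?thesis unfolding uniform_quad_def r_def
      by (simp add: Image_uniformity_subset[OF u W(1,2)] nbhd_entourage_Image_mem[OF u W(1,2)])
  qed
  ultimately show thesis using that by blast
qed

lemma card_of_min_cofinal_le_Fpow:
  assumes C: "min_cofinal \<U> rev_incl C" and "Q \<noteq> {}"
    and mem: "\<And>F. F \<in> Fpow Q \<Longrightarrow> I F \<in> \<U>"
    and antimono: "\<And>F G. F \<subseteq> G \<Longrightarrow> I G \<subseteq> I F"
    and cofinal: "\<And>V. V \<in> \<U> \<Longrightarrow> \<exists>F\<in>Fpow Q. I F \<subseteq> V"
  shows "|C| \<le>o |Q|"
proof (cases "finite Q")
  case True
  then have "Q \<in> Fpow Q" unfolding Fpow_def by blast
  have "cofinal_in \<U> rev_incl {I Q}" unfolding cofinal_in_def rev_incl_def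
  proof (intro conjI ballI)
    show "{I Q} \<subseteq> \<U>" using mem \<open>Q \<in> Fpow Q\<close> by blast
    fix V assume "V \<in> \<U>"
    then obtain F where "F \<subseteq> Q" "I F \<subseteq> V" using cofinal unfolding Fpow_def by blast
    then show "\<exists>c\<in>{I Q}. c \<subseteq> V" using antimono[OF \<open>F \<subseteq> Q\<close>] by blast
  qed
  then have "|C| \<le>o |{I Q}|" using C unfolding min_cofinal_def by blast
  also have "|{I Q}| \<le>o |Q|" using card_of_singl_ordLeq[OF \<open>Q \<noteq> {}\<close>] .
  finally show ?thesis .
next
  case False
  have "cofinal_in \<U> rev_incl (I ` Fpow Q)"
    using mem cofinal unfolding cofinal_in_def rev_incl_def by (auto simp: image_subset_iff)
  then have "|C| \<le>o |I ` Fpow Q|" using C unfolding min_cofinal_def by blast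
  also have "|I ` Fpow Q| \<le>o |Fpow Q|" by (rule card_of_image)
  also have "|Fpow Q| =o |Q|"
    using eqpoll_Fpow[OF False] by (simp add: eqpoll_iff_card_of_ordIso)
  finally show ?thesis .
qed

lemma card_of_min_cofinal_le_maximal_separated_family:
  assumes u: "uniformity X \<U>" and tb: "totally_bounded_unif X \<U>"
    and C: "min_cofinal \<U> rev_incl C" and Q: "separated_family X \<U> Q"
    and maximal: "\<And>Q'. separated_family X \<U> Q' \<Longrightarrow> Q \<subseteq> Q' \<Longrightarrow> Q' = Q"
  shows "|C| \<le>o |Q|"
proof -
  have no_new_quad: "\<exists>q\<in>Q. interlocked q r" if "uniform_quad X \<U> r" for r
  proof (rule ccontr)
    assume none: "\<not> ?thesis"
    then have "insert r Q = Q" using maximal separated_family_insert[OF Q that] by blast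
    then show False using none uniform_quad_interlocked_self[OF u that] by blast
  qed
  define I where "I F = X \<times> X \<inter> \<Inter>(inner_entourage X ` F)" for F
  show ?thesis
  proof (rule card_of_min_cofinal_le_Fpow[OF C, of _ I])
    show "Q \<noteq> {}" using no_new_quad[OF uniform_quad_trivial[OF u]] by blast
    show "I F \<in> \<U>" if "F \<in> Fpow Q" for F
      using that Q unfolding I_def Fpow_def separated_family_def
      by (intro uniformity_Inter_finite[OF u]) (auto intro: uniform_quad_inner_entourage_mem)
    show "I G \<subseteq> I F" if "F \<subseteq> G" for F G
      using that unfolding I_def by blast
    show "\<exists>F\<in>Fpow Q. I F \<subseteq> V" if "V \<in> \<U>" for V
    proof (rule ccontr)
      assume "\<not> ?thesis"
      then have "\<not> X \<times> X \<inter> \<Inter>(inner_entourage X ` F) \<subseteq> V" if "finite F" "F \<subseteq> Q" for F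
        using that unfolding I_def Fpow_def by blast
      then obtain r where "uniform_quad X \<U> r" "\<forall>q\<in>Q. \<not> interlocked q r"
        by (rule ex_uniform_quad_not_interlocked[OF u tb \<open>V \<in> \<U>\<close>])
      then show False using no_new_quad by blast
    qed
  qed
qed

lemma tukey_ge_uniformity_fin_subsets:
  assumes u: "uniformity X \<U>" and tb: "totally_bounded_unif X \<U>"
    and C: "min_cofinal \<U> rev_incl C" and K: "|K| =o |C|"
  shows "tukey_ge \<U> rev_incl (fin_subsets K) (\<subseteq>)"
proof -
  obtain Q where Q: "separated_family X \<U> Q"
    and maximal: "\<And>Q'. separated_family X \<U> Q' \<Longrightarrow> Q \<subseteq> Q' \<Longrightarrow> Q' = Q"
    using ex_maximal_separated_family[of X \<U>] by blast
  have "|K| \<le>o |Q|"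
    using K card_of_min_cofinal_le_maximal_separated_family[OF u tb C Q maximal]
    by (rule ordIso_ordLeq_trans)
  then obtain g where g: "inj_on g K" "g ` K \<subseteq> Q" by (meson card_of_ordLeq)
  show ?thesis
  proof (rule tukey_ge_uniformity_fin_subsets_if_finite[OF u])
    show "(outer_entourage X \<circ> g) ` K \<subseteq> \<U>"
      using g(2) Q uniform_quad_outer_entourage_mem[OF u] unfolding separated_family_def by auto
    fix V assume "V \<in> \<U>"
    have "g ` {k\<in>K. V \<subseteq> (outer_entourage X \<circ> g) k} \<subseteq> {q\<in>Q. V \<subseteq> outer_entourage X q}"
      using g(2) by auto
    then have "finite (g ` {k\<in>K. V \<subseteq> (outer_entourage X \<circ> g) k})"
      using finite_separated_family_above[OF u tb \<open>V \<in> \<U>\<close> Q] by (rule finite_subset)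
    then show "finite {k\<in>K. V \<subseteq> (outer_entourage X \<circ> g) k}"
      by (rule finite_imageD) (rule inj_on_subset[OF g(1)], blast)
  qed
qed

lemma tukey_eq_uniformity_fin_subsets:
  assumes "uniformity X \<U>" "totally_bounded_unif X \<U>"
    and "min_cofinal \<U> rev_incl C" "|K| =o |C|"
  shows "tukey_eq \<U> rev_incl (fin_subsets K) (\<subseteq>)"
  using assms tukey_ge_uniformity_fin_subsets tukey_ge_fin_subsets_uniformity
  unfolding tukey_eq_def min_cofinal_def by blast

theorem mainTheorem7:
  fixes X :: "'a set" and \<U> :: "('a \<times> 'a) set set"
  assumes "uniformity X \<U>"
  shows "(\<forall>C (K :: 'k set). totally_bounded_unif X \<U> \<and> min_cofinal \<U> rev_incl C
            \<and> ordIso2 (card_of K) (card_of C)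
          \<longrightarrow> tukey_eq \<U> rev_incl (fin_subsets K) (\<subseteq>))
       \<and> (\<forall>S C (K :: 'k set). S \<subseteq> X \<and> totally_bounded_subset \<U> S
            \<and> min_cofinal (restr_unif \<U> S) rev_incl C \<and> ordIso2 (card_of K) (card_of C)
          \<longrightarrow> tukey_eq (restr_unif \<U> S) rev_incl (fin_subsets K) (\<subseteq>))"
  using tukey_eq_uniformity_fin_subsets[OF assms]
    tukey_eq_uniformity_fin_subsets[OF uniformity_restr_unif[OF assms]]
  unfolding totally_bounded_subset_def by blast

end
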